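(* Let $\mathcal{T}$ be an MPQ-tree of an interval graph $G=(V,E)$, let $(x,y)\in E$ with $x$ over $y$ and $node(x)\neq node(y)$. If the $\langle x,y\rangle$-tree-path is not almost rotable, then $(x,y)$ is not an interval edge.
   Context: Graphs are finite and simple; for $G=(V,E)$ and $e\in E$, $G-e=(V,E\setminus\{e\})$. An edge $(x,y)\in E$ of an interval graph $G$ is an interval edge if $G-(x,y)$ is an interval graph. An MPQ-tree of an interval graph $G=(V,E)$, $V=\{1,\dots,n\}$, is a rooted plane tree whose nodes are P-nodes and Q-nodes. Each P-node carries a (possibly empty) set of vertices. A Q-node has $k\ge 3$ ordered positions $1,\dots,k$; position $i$ carries a set $S_i\subseteq V$ (the $i$-th section) and a child subtree $T_i$, which may be empty. Every vertex $v$ is assigned to exactly one node $node(v)$: either $v$ lies in the set of the P-node $node(v)$, or $node(v)$ is a Q-node and $v$ lies exactly in the sections $S_{l(v)},\dots,S_{r(v)}$ of it, with $l(v)<r(v)$. For a node with child subtrees $T_1,\dots,T_k$, $V_i$ denotes the set of vertices assigned to nodes of $T_i$ ($V_i=\emptyset$ if $T_i$ is empty). The maximal cliques of $G$ are in bijection with the descending paths from the root which at a P-node continue into one of its children (stopping if there is none) and at a Q-node choose a position $i$ and continue into $T_i$ (stopping if $T_i$ is empty); the clique is the union of the sets of the visited P-nodes and the chosen sections. Reading these cliques left to right gives a linear order of the maximal cliques, and the orders obtained this way after arbitrarily permuting children of P-nodes and reversing the positions of Q-nodes are exactly the orders of the maximal cliques of $G$ in which the cliques containing any fixed vertex are consecutive.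 Moreover, for every Q-node with sections $S_1,\dots,S_k$: (a) $V_1\neq\emptyset$ and $V_k\ne\emptyset$; (b) $S_1\subseteq S_2$ and $S_k\subseteq S_{k-1}$; (c) $S_{i-1}\cap S_i\neq\emptyset$ for $2\le i\le k$; (d) $S_{i-1}\neq S_i$ for $2\le i\le k$; (e) $(S_i\cap S_{i+1})\setminus S_1\neq\emptyset$ and $(S_{i-1}\cap S_i)\setminus S_k\neq\emptyset$ for $2\le i\le k-1$; (f) $(S_{i-1}\cup V_{i-1})\setminus S_i\neq\emptyset$ and $(S_i\cup V_i)\setminus S_{i-1}\neq\emptyset$ for $2\le i\le k$; and further (g) no empty P-node has an empty P-node as its parent, (h) no P-node has exactly one child whose root is a P-node, (i) every child subtree of a P-node is nonempty. We say $x$ is over $y$ if $node(x)$ is the lowest common ancestor of $node(x)$ and $node(y)$ in $\mathcal{T}$. For $x$ over $y$ with $node(x)\ne node(y)$, the $\langle x,y\rangle$-tree-path is the tree path $node(x)=n_1,n_2,\dots,n_t=node(y)$. For a Q-node with sections $S_1,\dots,S_k$, section $S_a$ is central if $1<a<k$. The path goes through a central section if for some $1<i<t$, $n_i$ is a Q-node and $n_{i+1}$ lies in the subtree $T_a$ of a central section $S_a$ of $n_i$. The path is almost rotable if it does not go through a central section and $n_t$ is a P-node that is a leaf of $\mathcal{T}$. *)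

theory Defs
  imports Complex_Main
begin

definition simple_graph :: "'a set \<Rightarrow> 'a set set \<Rightarrow> bool" where
  "simple_graph V E \<longleftrightarrow> finite V \<and> (\<forall>e\<in>E. e \<subseteq> V \<and> card e = 2)"

definition interval_graph :: "'a set \<Rightarrow> 'a set set \<Rightarrow> bool" where
  "interval_graph V E \<longleftrightarrow> simple_graph V E \<and>
     (\<exists>I :: 'a \<Rightarrow> real \<times> real.
        (\<forall>v\<in>V. fst (I v) \<le> snd (I v)) \<and>
        (\<forall>u\<in>V. \<forall>v\<in>V. u \<noteq> v \<longrightarrow>
            ({u, v} \<in> E \<longleftrightarrow> max (fst (I u)) (fst (I v)) \<le> min (snd (I u)) (snd (I v)))))"

definition interval_edge :: "'a set \<Rightarrow> 'a set set \<Rightarrow> 'a \<Rightarrow> 'a \<Rightarrow> bool" where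
  "interval_edge V E x y \<longleftrightarrow> interval_graph V E \<and> {x, y} \<in> E \<and> interval_graph V (E - {{x, y}})"

definition is_clique :: "'a set \<Rightarrow> 'a set set \<Rightarrow> 'a set \<Rightarrow> bool" where
  "is_clique V E C \<longleftrightarrow> C \<subseteq> V \<and> (\<forall>u\<in>C. \<forall>v\<in>C. u \<noteq> v \<longrightarrow> {u, v} \<in> E)"

definition max_clique :: "'a set \<Rightarrow> 'a set set \<Rightarrow> 'a set \<Rightarrow> bool" where
  "max_clique V E C \<longleftrightarrow> is_clique V E C \<and> (\<forall>D. is_clique V E D \<and> C \<subseteq> D \<longrightarrow> D = C)"

text \<open>A P-node carries a vertex set and an ordered list of (nonempty) child subtrees.
  A Q-node carries the ordered list of its positions; position i carries the section
  S_i and an optional child subtree T_i (None = empty subtree).\<close>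

datatype 'a mpq = PN "'a set" "'a mpq list" | QN "('a set \<times> 'a mpq option) list"

text \<open>Nodes are addressed by index lists from the root (plane tree addresses).
  at_addr T p n: the node at address p of T is (the subtree rooted at) n.\<close>

inductive at_addr :: "'a mpq \<Rightarrow> nat list \<Rightarrow> 'a mpq \<Rightarrow> bool" where
  root: "at_addr t [] t"
| pchild: "i < length cs \<Longrightarrow> at_addr (cs ! i) p n \<Longrightarrow> at_addr (PN S cs) (i # p) n"
| qchild: "i < length ss \<Longrightarrow> snd (ss ! i) = Some c \<Longrightarrow> at_addr c p n \<Longrightarrow> at_addr (QN ss) (i # p) n"

fun here :: "'a \<Rightarrow> 'a mpq \<Rightarrow> bool" where
  "here v (PN S cs) \<longleftrightarrow> v \<in> S"
| "here v (QN ss) \<longleftrightarrow> (\<exists>i < length ss. v \<in> fst (ss ! i))"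

definition tverts :: "'a mpq \<Rightarrow> 'a set" where
  "tverts t = {v. \<exists>p n. at_addr t p n \<and> here v n}"

definition opt_verts :: "'a mpq option \<Rightarrow> 'a set" where
  "opt_verts co = (case co of None \<Rightarrow> {} | Some c \<Rightarrow> tverts c)"

text \<open>The maximal cliques of descending paths, read left to right.\<close>

primrec cseq :: "'a mpq \<Rightarrow> 'a set list" where
  "cseq (PN S cs) = (if cs = [] then [S] else concat (map (map ((\<union>) S)) (map cseq cs)))"
| "cseq (QN ss) = concat (map (\<lambda>(Si, co). case co of None \<Rightarrow> [Si] | Some l \<Rightarrow> map ((\<union>) Si) l)
                              (map (map_prod id (map_option cseq)) ss))"

inductive tequiv :: "'a mpq \<Rightarrow> 'a mpq \<Rightarrow> bool" where
  pperm: "length ds = length cs \<Longrightarrow> bij_betw \<pi> {..<length cs} {..<length cs} \<Longrightarrow>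
          (\<forall>i < length cs. tequiv (cs ! i) (ds ! \<pi> i)) \<Longrightarrow> tequiv (PN S cs) (PN S ds)"
| qsame: "length ts = length ss \<Longrightarrow>
          (\<forall>i < length ss. fst (ts ! i) = fst (ss ! i) \<and>
             ((snd (ss ! i) = None \<and> snd (ts ! i) = None) \<or>
              (\<exists>a b. snd (ss ! i) = Some a \<and> snd (ts ! i) = Some b \<and> tequiv a b))) \<Longrightarrow>
          tequiv (QN ss) (QN ts)"
| qrev: "length ts = length ss \<Longrightarrow>
          (\<forall>i < length ss. fst (ts ! i) = fst (ss ! i) \<and>
             ((snd (ss ! i) = None \<and> snd (ts ! i) = None) \<or>
              (\<exists>a b. snd (ss ! i) = Some a \<and> snd (ts ! i) = Some b \<and> tequiv a b))) \<Longrightarrow>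
          tequiv (QN ss) (QN (rev ts))"

definition consecutive :: "'a set list \<Rightarrow> bool" where
  "consecutive L \<longleftrightarrow> (\<forall>v i j k. i \<le> j \<and> j \<le> k \<and> k < length L \<and> v \<in> L ! i \<and> v \<in> L ! k \<longrightarrow> v \<in> L ! j)"

text \<open>Local structural conditions at a node: (k >= 3) and (a)-(f) for Q-nodes
  (with 0-based positions 0..k-1), (g) and (h) for P-nodes. Condition (i) is built
  into the datatype (children of P-nodes are trees, hence nonempty).\<close>

fun node_ok :: "'a mpq \<Rightarrow> bool" where
  "node_ok (PN S cs) \<longleftrightarrow>
     (S = {} \<longrightarrow> (\<forall>c\<in>set cs. \<forall>ds. c \<noteq> PN {} ds)) \<and>
     \<not> (\<exists>T ds. cs = [PN T ds])"
| "node_ok (QN ss) \<longleftrightarrow>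
     (let k = length ss; S = (\<lambda>i. fst (ss ! i)); W = (\<lambda>i. opt_verts (snd (ss ! i))) in
      k \<ge> 3 \<and>
      W 0 \<noteq> {} \<and> W (k - 1) \<noteq> {} \<and>
      S 0 \<subseteq> S 1 \<and> S (k - 1) \<subseteq> S (k - 2) \<and>
      (\<forall>i. 1 \<le> i \<and> i < k \<longrightarrow> S (i - 1) \<inter> S i \<noteq> {}) \<and>
      (\<forall>i. 1 \<le> i \<and> i < k \<longrightarrow> S (i - 1) \<noteq> S i) \<and>
      (\<forall>i. 1 \<le> i \<and> i \<le> k - 2 \<longrightarrow>
           (S i \<inter> S (i + 1)) - S 0 \<noteq> {} \<and> (S (i - 1) \<inter> S i) - S (k - 1) \<noteq> {}) \<and>
      (\<forall>i. 1 \<le> i \<and> i < k \<longrightarrow>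
           (S (i - 1) \<union> W (i - 1)) - S i \<noteq> {} \<and> (S i \<union> W i) - S (i - 1) \<noteq> {}))"

definition mpq_tree_of :: "'a set \<Rightarrow> 'a set set \<Rightarrow> 'a mpq \<Rightarrow> bool" where
  "mpq_tree_of V E T \<longleftrightarrow>
     \<comment> \<open>vertex assignment: every vertex assigned to exactly one node, nothing else occurs\<close>
     (\<forall>v\<in>V. \<exists>!p. \<exists>n. at_addr T p n \<and> here v n) \<and>
     (\<forall>p n v. at_addr T p n \<and> here v n \<longrightarrow> v \<in> V) \<and>
     \<comment> \<open>at a Q-node a vertex lies exactly in sections l..r with l < r\<close>
     (\<forall>p ss v. at_addr T p (QN ss) \<and> here v (QN ss) \<longrightarrow>
        (\<exists>l r. l < r \<and> r < length ss \<and> (\<forall>i < length ss. v \<in> fst (ss ! i) \<longleftrightarrow> l \<le> i \<and> i \<le> r))) \<and>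
     \<comment> \<open>maximal cliques in bijection with descending paths\<close>
     distinct (cseq T) \<and> set (cseq T) = {C. max_clique V E C} \<and>
     \<comment> \<open>tree transformations give exactly the consecutive clique orderings\<close>
     (\<forall>L. (distinct L \<and> set L = {C. max_clique V E C} \<and> consecutive L) \<longleftrightarrow>
          (\<exists>T'. tequiv T T' \<and> cseq T' = L)) \<and>
     \<comment> \<open>local conditions (a)-(i)\<close>
     (\<forall>p n. at_addr T p n \<longrightarrow> node_ok n)"

definition node :: "'a mpq \<Rightarrow> 'a \<Rightarrow> nat list" where
  "node T v = (THE p. \<exists>n. at_addr T p n \<and> here v n)"

text \<open>x is over y: node(x) is the lowest common ancestor of node(x) and node(y),
  i.e. node(x) is an ancestor (address prefix) of node(y).\<close>

definition over :: "'a mpq \<Rightarrow> 'a \<Rightarrow> 'a \<Rightarrow> bool" where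
  "over T x y \<longleftrightarrow> (\<exists>s. node T y = node T x @ s)"

text \<open>The <x,y>-tree-path n_1..n_t consists of the nodes at addresses
  take m (node y) for length (node x) <= m <= length (node y). It goes through a
  central section if some inner node n_i (1 < i < t) is a Q-node with k positions
  and the next node lies in the subtree of a position a with 0 < a < k-1 (0-based).\<close>

definition through_central :: "'a mpq \<Rightarrow> 'a \<Rightarrow> 'a \<Rightarrow> bool" where
  "through_central T x y \<longleftrightarrow>
     (\<exists>m ss. length (node T x) < m \<and> m < length (node T y) \<and>
        at_addr T (take m (node T y)) (QN ss) \<and>
        0 < node T y ! m \<and> node T y ! m < length ss - 1)"

definition almost_rotable :: "'a mpq \<Rightarrow> 'a \<Rightarrow> 'a \<Rightarrow> bool" where
  "almost_rotable T x y \<longleftrightarrow> \<not> through_central T x y \<and> (\<exists>S. at_addr T (node T y) (PN S []))"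

end

theory Submission
  imports Defs "HOL-Library.Sublist"
begin

text \<open>
  Suppose G - xy had an interval model I. Two vertices of a common maximal clique other than
  {x, y} get meeting intervals, two vertices of no common maximal clique get disjoint ones, and
  the maximal cliques are the descending paths of the MPQ-tree. If the path from node(x) to
  node(y) passes through a central section of a Q-node, a vertex below the first position, a
  vertex below the last position and y form an asteroidal triple of G - xy. Otherwise node(y) is
  not a P-leaf, and the tree provides two vertices a, b at or below node(y) that share maximal
  cliques with both x and y but none with each other; then x a y b is an induced four-cycle of
  G - xy. Interval graphs have neither.
\<close>

section \<open>Interval models\<close>

definition proper_interval :: "real \<times> real \<Rightarrow> bool" where
  "proper_interval A \<longleftrightarrow> fst A \<le> snd A"

definition intervals_meet :: "real \<times> real \<Rightarrow> real \<times> real \<Rightarrow> bool" where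
  "intervals_meet A B \<longleftrightarrow> max (fst A) (fst B) \<le> min (snd A) (snd B)"

definition meets_avoiding :: "real \<times> real \<Rightarrow> real \<times> real \<Rightarrow> real \<times> real \<Rightarrow> bool" where
  "meets_avoiding P A B \<longleftrightarrow> proper_interval A \<and> proper_interval B \<and> intervals_meet A B \<and>
     \<not> intervals_meet A P \<and> \<not> intervals_meet B P"

lemma intervals_meet_commute: "intervals_meet A B \<longleftrightarrow> intervals_meet B A"
  unfolding intervals_meet_def by linarith

lemma intervals_meet_self: "proper_interval A \<Longrightarrow> intervals_meet A A"
  unfolding intervals_meet_def proper_interval_def by simp

lemma meets_avoiding_chain_same_side:
  assumes "(meets_avoiding P)\<^sup>*\<^sup>* A B" and "proper_interval P"
  shows "snd A < fst P \<longleftrightarrow> snd B < fst P"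
  using assms
  by induction (auto simp: meets_avoiding_def intervals_meet_def proper_interval_def)

lemma no_asteroidal_triple_intervals:
  assumes "proper_interval A" "proper_interval B" "proper_interval C"
    and "\<not> intervals_meet A B" "\<not> intervals_meet B C" "\<not> intervals_meet A C"
    and "(meets_avoiding C)\<^sup>*\<^sup>* A B" "(meets_avoiding A)\<^sup>*\<^sup>* B C" "(meets_avoiding B)\<^sup>*\<^sup>* A C"
  shows False
  using meets_avoiding_chain_same_side[OF assms(7,3)] meets_avoiding_chain_same_side[OF assms(8,1)]
    meets_avoiding_chain_same_side[OF assms(9,2)] assms(1-6)
  unfolding intervals_meet_def proper_interval_def by linarith

lemma no_induced_four_cycle_intervals:
  assumes "proper_interval A" "proper_interval B" "proper_interval C" "proper_interval D"
    and "intervals_meet A B" "intervals_meet B C" "intervals_meet C D" "intervals_meet D A"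
    and "\<not> intervals_meet A C" "\<not> intervals_meet B D"
  shows False
  using assms unfolding intervals_meet_def proper_interval_def by linarith

section \<open>Clique routes\<close>

lemma distinct_concat_unique_block:
  assumes "distinct (concat L)" "i < length L" "j < length L" "z \<in> set (L ! i)" "z \<in> set (L ! j)"
  shows "i = j"
  using assms
proof (induction L arbitrary: i j)
  case (Cons l L)
  then show ?case
    by (cases i; cases j) (auto simp: set_concat dest!: nth_mem)
qed simp

lemma max_clique_extends:
  assumes "finite V" "is_clique V E K"
  obtains C where "max_clique V E C" "K \<subseteq> C"
proof -
  let ?A = "{D. is_clique V E D \<and> K \<subseteq> D}"
  have "?A \<subseteq> Pow V" by (auto simp: is_clique_def)
  then have "finite ?A" using assms(1) finite_subset by blast
  moreover have "K \<in> ?A" using assms(2) by simp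
  ultimately obtain C where C: "C \<in> ?A" "\<forall>D\<in>?A. C \<le> D \<longrightarrow> C = D"
    using finite_has_maximal[of ?A] by blast
  then have "max_clique V E C" unfolding max_clique_def by blast
  with C(1) show ?thesis using that by blast
qed

lemma at_addr_Nil [simp]: "at_addr t [] n \<longleftrightarrow> n = t"
  by (auto intro: at_addr.intros elim: at_addr.cases)

lemma at_addr_PN_Cons [simp]: "at_addr (PN S cs) (i # p) n \<longleftrightarrow> i < length cs \<and> at_addr (cs ! i) p n"
  by (auto intro: at_addr.intros elim: at_addr.cases)

lemma at_addr_QN_Cons [simp]:
  "at_addr (QN ss) (i # p) n \<longleftrightarrow> i < length ss \<and> (\<exists>c. snd (ss ! i) = Some c \<and> at_addr c p n)"
  by (auto intro: at_addr.intros elim: at_addr.cases)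

lemma at_addr_unique: "at_addr t p n \<Longrightarrow> at_addr t p n' \<Longrightarrow> n = n'"
proof (induction p arbitrary: t)
  case (Cons i p)
  then show ?case by (cases t) auto
qed simp

lemma at_addr_append: "at_addr t p n \<Longrightarrow> at_addr n q m \<Longrightarrow> at_addr t (p @ q) m"
  by (induction rule: at_addr.induct) auto

inductive clique_route :: "'a mpq \<Rightarrow> nat list \<Rightarrow> 'a set \<Rightarrow> bool" where
  leaf: "clique_route (PN S []) [] S"
| P_child: "i < length cs \<Longrightarrow> clique_route (cs ! i) r C \<Longrightarrow> clique_route (PN S cs) (i # r) (S \<union> C)"
| Q_empty: "i < length ss \<Longrightarrow> snd (ss ! i) = None \<Longrightarrow> clique_route (QN ss) [i] (fst (ss ! i))"
| Q_child: "i < length ss \<Longrightarrow> snd (ss ! i) = Some c \<Longrightarrow> clique_route c r C \<Longrightarrow>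
    clique_route (QN ss) (i # r) (fst (ss ! i) \<union> C)"

definition Q_block :: "('a set \<times> 'a mpq option) list \<Rightarrow> nat \<Rightarrow> 'a set list" where
  "Q_block ss i = (case snd (ss ! i) of None \<Rightarrow> [fst (ss ! i)] | Some c \<Rightarrow> map ((\<union>) (fst (ss ! i))) (cseq c))"

lemma cseq_QN: "cseq (QN ss) = concat (map (Q_block ss) [0..<length ss])"
proof -
  have block: "(\<lambda>(Si, co). case co of None \<Rightarrow> [Si] | Some l \<Rightarrow> map ((\<union>) Si) l)
      (map_prod id (map_option cseq) p) =
      (case snd p of None \<Rightarrow> [fst p] | Some c \<Rightarrow> map ((\<union>) (fst p)) (cseq c))" for p
    by (cases p) (simp split: option.split)
  have "map (\<lambda>(Si, co). case co of None \<Rightarrow> [Si] | Some l \<Rightarrow> map ((\<union>) Si) l)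
          (map (map_prod id (map_option cseq)) ss) = map (Q_block ss) [0..<length ss]"
    by (rule nth_equalityI) (simp_all only: length_map length_upt nth_map block, simp add: Q_block_def)
  then show ?thesis by simp
qed

lemma cseq_PN:
  assumes "cs \<noteq> []"
  shows "cseq (PN S cs) = concat (map (\<lambda>i. map ((\<union>) S) (cseq (cs ! i))) [0..<length cs])"
proof -
  have "map (map ((\<union>) S)) (map cseq cs) = map (\<lambda>i. map ((\<union>) S) (cseq (cs ! i))) [0..<length cs]"
    by (rule nth_equalityI) auto
  then show ?thesis using assms by simp
qed

lemma clique_route_PN_cases:
  assumes "clique_route (PN S cs) r C"
  obtains "cs = []" "r = []" "C = S"
  | i r' C' where "r = i # r'" "i < length cs" "clique_route (cs ! i) r' C'" "C = S \<union> C'"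
  using assms by (cases rule: clique_route.cases) auto

lemma clique_route_QN_cases:
  assumes "clique_route (QN ss) r C"
  obtains i where "r = [i]" "i < length ss" "snd (ss ! i) = None" "C = fst (ss ! i)"
  | i c r' C' where "r = i # r'" "i < length ss" "snd (ss ! i) = Some c" "clique_route c r' C'"
      "C = fst (ss ! i) \<union> C'"
  using assms by (cases rule: clique_route.cases) auto

lemma set_cseq: "set (cseq t) = {C. \<exists>r. clique_route t r C}"
proof (induction t)
  case (PN S cs)
  show ?case
  proof (cases "cs = []")
    case True
    then show ?thesis by (auto intro: clique_route.leaf elim: clique_route_PN_cases)
  next
    case False
    have IH: "i < length cs \<Longrightarrow> set (cseq (cs ! i)) = {C. \<exists>r. clique_route (cs ! i) r C}" for i
      using PN by simp
    have "set (cseq (PN S cs)) = (\<Union>i<length cs. (\<union>) S ` set (cseq (cs ! i)))"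
      unfolding cseq_PN[OF False] by auto
    also have "\<dots> = (\<Union>i<length cs. (\<union>) S ` {C. \<exists>r. clique_route (cs ! i) r C})"
      using IH by simp
    also have "\<dots> = {C. \<exists>r. clique_route (PN S cs) r C}"
      using False by (auto intro: clique_route.P_child elim!: clique_route_PN_cases)
    finally show ?thesis .
  qed
next
  case (QN ss)
  have IH: "i < length ss \<Longrightarrow> snd (ss ! i) = Some c \<Longrightarrow> set (cseq c) = {C. \<exists>r. clique_route c r C}"
    for i c using QN by (metis nth_mem prod.collapse snds.intros option.set_intros)
  have blocks: "set (Q_block ss i) = {C. \<exists>r. clique_route (QN ss) (i # r) C}" if "i < length ss" for i
  proof (cases "snd (ss ! i)")
    case None
    then show ?thesis
      using that by (auto simp: Q_block_def intro: clique_route.Q_empty elim!: clique_route_QN_cases)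
  next
    case (Some c)
    then show ?thesis
      using that IH[OF that Some]
      by (fastforce simp: Q_block_def intro: clique_route.Q_child elim!: clique_route_QN_cases)
  qed
  then have "set (cseq (QN ss)) = (\<Union>i<length ss. {C. \<exists>r. clique_route (QN ss) (i # r) C})"
    unfolding cseq_QN by auto
  also have "\<dots> = {C. \<exists>r. clique_route (QN ss) r C}"
  proof (intro equalityI subsetI)
    fix C assume "C \<in> {C. \<exists>r. clique_route (QN ss) r C}"
    then obtain r where r: "clique_route (QN ss) r C" by blast
    then obtain i r' where "r = i # r'" "i < length ss"
      by (cases rule: clique_route_QN_cases) auto
    then show "C \<in> (\<Union>i<length ss. {C. \<exists>r. clique_route (QN ss) (i # r) C})"
      using r by blast
  qed auto
  finally show ?case .
qed

lemma clique_route_in_cseq: "clique_route t r C \<Longrightarrow> C \<in> set (cseq t)"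
  using set_cseq by blast

lemma clique_route_PN_in_block:
  "clique_route (PN S cs) (i # r) C \<Longrightarrow> i < length cs \<and> C \<in> set (map ((\<union>) S) (cseq (cs ! i)))"
  by (auto elim!: clique_route_PN_cases dest: clique_route_in_cseq)

lemma clique_route_QN_in_block: "clique_route (QN ss) (i # r) C \<Longrightarrow> i < length ss \<and> C \<in> set (Q_block ss i)"
  by (auto simp: Q_block_def elim!: clique_route_QN_cases dest: clique_route_in_cseq)

lemma clique_route_unique:
  assumes "clique_route t r C" "clique_route t r' C" "distinct (cseq t)"
  shows "r = r'"
  using assms
proof (induction arbitrary: r' rule: clique_route.induct)
  case (leaf S)
  then show ?case by (auto elim: clique_route_PN_cases)
next
  case (P_child i cs r C S)
  from P_child.prems(1) obtain j r2 C2 where j: "r' = j # r2" "clique_route (cs ! j) r2 C2" "S \<union> C = S \<union> C2"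
    using P_child.hyps(1) by (cases rule: clique_route_PN_cases) auto
  have "cs \<noteq> []" using P_child.hyps(1) by auto
  have distinct: "distinct (concat (map (\<lambda>i. map ((\<union>) S) (cseq (cs ! i))) [0..<length cs]))"
    using P_child.prems(2) unfolding cseq_PN[OF \<open>cs \<noteq> []\<close>] .
  have "i = j"
    using distinct_concat_unique_block[OF distinct, of i j "S \<union> C"]
      clique_route_PN_in_block[OF clique_route.P_child[OF P_child.hyps]] clique_route_PN_in_block[of S cs j]
      P_child.prems(1) j(1) by simp
  have "distinct (map ((\<union>) S) (cseq (cs ! i)))"
    using distinct P_child.hyps(1) by (simp add: distinct_concat_iff)
  then have "C = C2" "distinct (cseq (cs ! i))"
    using clique_route_in_cseq[OF P_child.hyps(2)] clique_route_in_cseq[OF j(2)] j(3) \<open>i = j\<close>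
    by (auto simp: distinct_map dest: inj_onD)
  then show ?case using P_child.IH j \<open>i = j\<close> by simp
next
  case (Q_empty i ss)
  from Q_empty.prems(1) obtain j r2 where rj: "r' = j # r2"
    by (cases rule: clique_route_QN_cases) auto
  moreover have "distinct (concat (map (Q_block ss) [0..<length ss]))"
    using Q_empty.prems(2) unfolding cseq_QN .
  ultimately have "i = j"
    using distinct_concat_unique_block[of _ i j "fst (ss ! i)"]
      clique_route_QN_in_block[OF clique_route.Q_empty[OF Q_empty.hyps]] clique_route_QN_in_block[of ss j]
      Q_empty.prems(1) by simp
  then show ?case
    using Q_empty.prems(1) Q_empty.hyps(2) rj by (auto elim: clique_route_QN_cases)
next
  case (Q_child i ss c r C)
  from Q_child.prems(1) obtain j r2 where "r' = j # r2"
    by (cases rule: clique_route_QN_cases) auto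
  moreover have distinct: "distinct (concat (map (Q_block ss) [0..<length ss]))"
    using Q_child.prems(2) unfolding cseq_QN .
  ultimately have "i = j"
    using distinct_concat_unique_block[of _ i j "fst (ss ! i) \<union> C"]
      clique_route_QN_in_block[OF clique_route.Q_child[OF Q_child.hyps(1-3)]] clique_route_QN_in_block[of ss j]
      Q_child.prems(1) by simp
  with Q_child.prems(1) obtain r2 C2 where r2: "r' = i # r2" "clique_route c r2 C2"
    "fst (ss ! i) \<union> C = fst (ss ! i) \<union> C2"
    using \<open>r' = j # r2\<close> Q_child.hyps(2) by (cases rule: clique_route_QN_cases) auto
  have "distinct (Q_block ss i)"
    using distinct Q_child.hyps(1) by (simp add: distinct_concat_iff)
  then have "C = C2" "distinct (cseq c)"
    using clique_route_in_cseq[OF Q_child.hyps(3)] clique_route_in_cseq[OF r2(2)] r2(3) Q_child.hyps(2)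
    by (auto simp: Q_block_def distinct_map dest: inj_onD)
  then show ?case using Q_child.IH r2 by simp
qed

text \<open>What a clique route collects at node n when it continues with choice j.\<close>

fun route_part :: "'a mpq \<Rightarrow> nat \<Rightarrow> 'a set" where
  "route_part (PN S cs) j = S"
| "route_part (QN ss) j = (if j < length ss then fst (ss ! j) else {})"

lemma here_if_route_part: "v \<in> route_part n j \<Longrightarrow> here v n"
  by (cases n) (auto split: if_splits)

lemma ex_le_length_Cons: "(\<exists>m \<le> length (i # r). P m) \<longleftrightarrow> P 0 \<or> (\<exists>m \<le> length r. P (Suc m))"
  by (metis Suc_le_mono length_Cons not0_implies_Suc zero_le)

lemma mem_clique_route_iff:
  "clique_route t r C \<Longrightarrow> v \<in> C \<longleftrightarrow> (\<exists>m \<le> length r. \<exists>n. at_addr t (take m r) n \<and> v \<in> route_part n (r ! m))"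
  by (induction rule: clique_route.induct) (auto simp only: ex_le_length_Cons, auto)

lemma clique_route_exists:
  assumes "\<And>p ss. at_addr t p (QN ss) \<Longrightarrow> ss \<noteq> []"
  shows "\<exists>r C. clique_route t r C"
  using assms
proof (induction t)
  case (PN S cs)
  show ?case
  proof (cases cs)
    case Nil
    then show ?thesis by (auto intro: clique_route.leaf)
  next
    case (Cons c cs')
    then obtain r C where "clique_route c r C"
      using PN.IH[of c] PN.prems[of "0 # _"] by fastforce
    then show ?thesis
      using Cons clique_route.P_child[of 0 cs] by fastforce
  qed
next
  case (QN ss)
  then have "0 < length ss" by (metis at_addr_Nil length_greater_0_conv)
  show ?case
  proof (cases "snd (ss ! 0)")
    case None
    then show ?thesis using \<open>0 < length ss\<close> by (auto intro: clique_route.Q_empty)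
  next
    case (Some c)
    then obtain r C where "clique_route c r C"
      using QN.IH[of "ss ! 0" "Some c" c] QN.prems[of "0 # _"] \<open>0 < length ss\<close>
      by (fastforce simp: snds.simps)
    then show ?thesis
      using Some \<open>0 < length ss\<close> by (auto intro: clique_route.Q_child)
  qed
qed

lemma clique_route_prepend: "at_addr t p n \<Longrightarrow> clique_route n r C \<Longrightarrow> \<exists>C'. clique_route t (p @ r) C'"
  by (induction rule: at_addr.induct) (auto intro: clique_route.intros)

lemma clique_route_through_address:
  assumes "\<And>p ss. at_addr t p (QN ss) \<Longrightarrow> ss \<noteq> []" and "at_addr t p n"
  shows "\<exists>r C. clique_route t r C \<and> prefix p r"
proof -
  obtain r C where "clique_route n r C"
    using clique_route_exists[of n] assms at_addr_append by blast
  then obtain C' where "clique_route t (p @ r) C'"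
    using clique_route_prepend[OF assms(2)] by blast
  then show ?thesis by (meson prefixI)
qed

lemma clique_route_through_position:
  assumes "\<And>p ss. at_addr t p (QN ss) \<Longrightarrow> ss \<noteq> []" and "at_addr t p (QN ss)" and "i < length ss"
  shows "\<exists>r C. clique_route t r C \<and> prefix (p @ [i]) r"
proof (cases "snd (ss ! i)")
  case None
  then obtain C' where "clique_route t (p @ [i]) C'"
    using clique_route_prepend[OF assms(2) clique_route.Q_empty[OF assms(3)]] by blast
  then show ?thesis by (meson prefix_order.refl)
next
  case (Some c)
  then have "at_addr t (p @ [i]) c"
    using at_addr_append[OF assms(2), of "[i]"] assms(3) by simp
  with assms(1) show ?thesis
    by (rule clique_route_through_address)
qed

section \<open>MPQ-trees\<close>

locale mpq_tree =
  fixes V :: "'a set" and E :: "'a set set" and T :: "'a mpq"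
  assumes simple: "simple_graph V E"
    and mpq: "mpq_tree_of V E T"
begin

lemma node_ok_at: "at_addr T p n \<Longrightarrow> node_ok n"
  using mpq by (simp add: mpq_tree_of_def)

lemma Q_node_nonempty: "at_addr T p (QN ss) \<Longrightarrow> ss \<noteq> []"
  using node_ok_at[of p "QN ss"] by (auto simp: Let_def)

lemma Q_node_length: "at_addr T p (QN ss) \<Longrightarrow> 3 \<le> length ss"
  using node_ok_at[of p "QN ss"] by (simp add: Let_def)

lemma Q_node_outer_subtrees:
  "at_addr T p (QN ss) \<Longrightarrow> opt_verts (snd (ss ! 0)) \<noteq> {} \<and> opt_verts (snd (ss ! (length ss - 1))) \<noteq> {}"
  using node_ok_at[of p "QN ss"] by (simp add: Let_def)

lemma Q_node_overlaps:
  assumes "at_addr T p (QN ss)" "1 \<le> i" "i \<le> length ss - 2"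
  shows "(fst (ss ! i) \<inter> fst (ss ! (i + 1))) - fst (ss ! 0) \<noteq> {}"
    and "(fst (ss ! (i - 1)) \<inter> fst (ss ! i)) - fst (ss ! (length ss - 1)) \<noteq> {}"
  using node_ok_at[OF assms(1)] assms(2,3) by (simp_all add: Let_def)

lemma Q_node_neighbour_differences:
  assumes "at_addr T p (QN ss)" "1 \<le> i" "i < length ss"
  shows "(fst (ss ! (i - 1)) \<union> opt_verts (snd (ss ! (i - 1)))) - fst (ss ! i) \<noteq> {}"
    and "(fst (ss ! i) \<union> opt_verts (snd (ss ! i))) - fst (ss ! (i - 1)) \<noteq> {}"
  using node_ok_at[OF assms(1)] assms(2,3) by (simp_all add: Let_def)

lemma here_in_V: "at_addr T p n \<Longrightarrow> here v n \<Longrightarrow> v \<in> V"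
  using mpq by (simp add: mpq_tree_of_def)

lemma unique_node: "v \<in> V \<Longrightarrow> \<exists>!p. \<exists>n. at_addr T p n \<and> here v n"
  using mpq by (simp add: mpq_tree_of_def)

lemma node_eqI:
  assumes "at_addr T p n" "here v n"
  shows "node T v = p"
  unfolding node_def using assms by (intro the1_equality[OF unique_node[OF here_in_V[OF assms]]]) blast

lemma at_addr_node:
  assumes "v \<in> V"
  obtains n where "at_addr T (node T v) n" "here v n"
  using unique_node[OF assms] node_eqI by blast

lemma Q_vertex_section_range:
  assumes "at_addr T p (QN ss)" "here v (QN ss)"
  obtains l r where "l < r" "r < length ss" "\<And>i. i < length ss \<Longrightarrow> v \<in> fst (ss ! i) \<longleftrightarrow> l \<le> i \<and> i \<le> r"
  using mpq assms unfolding mpq_tree_of_def by blast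

lemma sections_convex:
  assumes "at_addr T p (QN ss)" "i \<le> j" "j \<le> k" "k < length ss" "v \<in> fst (ss ! i)" "v \<in> fst (ss ! k)"
  shows "v \<in> fst (ss ! j)"
proof -
  have "here v (QN ss)" using assms(2-6) by auto
  then obtain l r where "\<And>i. i < length ss \<Longrightarrow> v \<in> fst (ss ! i) \<longleftrightarrow> l \<le> i \<and> i \<le> r"
    using Q_vertex_section_range[OF assms(1)] by metis
  then show ?thesis
    using assms(2-6) by (metis le_less_trans le_trans)
qed

lemma node_below_position:
  assumes "at_addr T p (QN ss)" "j < length ss" "v \<in> opt_verts (snd (ss ! j))"
  shows "v \<in> V" "prefix (p @ [j]) (node T v)"
proof -
  obtain c where c: "snd (ss ! j) = Some c" "v \<in> tverts c"
    using assms(3) by (auto simp: opt_verts_def split: option.splits)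
  then obtain q m where "at_addr c q m" "here v m"
    unfolding tverts_def by blast
  moreover have "at_addr T (p @ [j]) c"
    using at_addr_append[OF assms(1), of "[j]"] assms(2) c(1) by simp
  ultimately have "at_addr T (p @ [j] @ q) m" "here v m"
    using at_addr_append by fastforce+
  then show "v \<in> V" "prefix (p @ [j]) (node T v)"
    using here_in_V node_eqI by (auto simp: prefix_def)
qed

lemma node_of_Q_vertex:
  assumes "at_addr T p (QN ss)" "j < length ss" "v \<in> fst (ss ! j) \<union> opt_verts (snd (ss ! j))"
  shows "v \<in> V" "prefix p (node T v)"
proof -
  have "v \<in> V \<and> prefix p (node T v)"
  proof (cases "v \<in> fst (ss ! j)")
    case True
    then have "here v (QN ss)" using assms(2) by auto
    then show ?thesis using here_in_V node_eqI assms(1) by blast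
  next
    case False
    then show ?thesis
      using node_below_position[OF assms(1,2)] assms(3) append_prefixD by blast
  qed
  then show "v \<in> V" "prefix p (node T v)" by blast+
qed

lemma set_cseq_T: "set (cseq T) = {C. max_clique V E C}"
  using mpq by (simp add: mpq_tree_of_def)

lemma distinct_cseq_T: "distinct (cseq T)"
  using mpq by (simp add: mpq_tree_of_def)

lemma clique_route_max_clique: "clique_route T r C \<Longrightarrow> max_clique V E C"
  using clique_route_in_cseq set_cseq_T by blast

lemma clique_route_subset_V: "clique_route T r C \<Longrightarrow> C \<subseteq> V"
  using clique_route_max_clique by (auto simp: max_clique_def is_clique_def)

lemma clique_in_clique_route:
  assumes "is_clique V E K"
  obtains r C where "clique_route T r C" "K \<subseteq> C"
proof -
  have "finite V" using simple by (simp add: simple_graph_def)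
  then obtain C where "max_clique V E C" "K \<subseteq> C"
    using max_clique_extends assms by blast
  then show ?thesis
    using that set_cseq[of T] set_cseq_T by blast
qed

lemma vertex_in_clique_route:
  assumes "v \<in> V"
  obtains r C where "clique_route T r C" "v \<in> C"
  using clique_in_clique_route[of "{v}"] assms by (auto simp: is_clique_def)

lemma clique_route_through_node:
  assumes "at_addr T p n"
  obtains r C where "clique_route T r C" "prefix p r"
proof -
  have "\<exists>r C. clique_route T r C \<and> prefix p r"
    by (rule clique_route_through_address[OF _ assms]) (rule Q_node_nonempty)
  then show ?thesis using that by blast
qed

lemma mem_clique_route_node_iff:
  assumes "clique_route T r C" "at_addr T (node T v) n"
  shows "v \<in> C \<longleftrightarrow> prefix (node T v) r \<and> v \<in> route_part n (r ! length (node T v))"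
proof
  assume "v \<in> C"
  then obtain m n' where m: "m \<le> length r" "at_addr T (take m r) n'" "v \<in> route_part n' (r ! m)"
    using mem_clique_route_iff[OF assms(1)] by blast
  then have "node T v = take m r"
    using node_eqI[OF m(2) here_if_route_part[OF m(3)]] by blast
  moreover have "n' = n"
    using at_addr_unique[OF m(2)] assms(2) calculation by simp
  ultimately show "prefix (node T v) r \<and> v \<in> route_part n (r ! length (node T v))"
    using m by (simp add: take_is_prefix min_absorb2)
next
  assume "prefix (node T v) r \<and> v \<in> route_part n (r ! length (node T v))"
  then have "take (length (node T v)) r = node T v" "length (node T v) \<le> length r"
    "v \<in> route_part n (r ! length (node T v))"
    by (auto simp: prefix_def)
  then have "\<exists>m \<le> length r. \<exists>n'. at_addr T (take m r) n' \<and> v \<in> route_part n' (r ! m)"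
    using assms(2) by (intro exI[of _ "length (node T v)"]) auto
  then show "v \<in> C"
    using mem_clique_route_iff[OF assms(1)] by blast
qed

lemma node_prefix_clique_route:
  assumes "clique_route T r C" "v \<in> C"
  shows "prefix (node T v) r"
proof -
  obtain m n where "at_addr T (take m r) n" "v \<in> route_part n (r ! m)"
    using mem_clique_route_iff[OF assms(1)] assms(2) by blast
  then have "node T v = take m r"
    using node_eqI here_if_route_part by metis
  then show ?thesis by (simp add: take_is_prefix)
qed

lemma vertex_in_clique_route_below:
  assumes "v \<in> V" "prefix q (node T v)"
  obtains r C where "clique_route T r C" "v \<in> C" "prefix q r"
proof -
  obtain r C where "clique_route T r C" "v \<in> C"
    using vertex_in_clique_route[OF assms(1)] .
  moreover from this have "prefix q r"
    using node_prefix_clique_route assms(2) prefix_order.trans by blast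
  ultimately show ?thesis using that by blast
qed

lemma clique_route_mem_transfer:
  assumes r1: "clique_route T r1 C1" and r2: "clique_route T r2 C2" and "v \<in> C1"
    and "length (node T v) < length r1" and "prefix (take (Suc (length (node T v))) r1) r2"
  shows "v \<in> C2"
proof -
  obtain n where n: "at_addr T (node T v) n"
    using at_addr_node clique_route_subset_V[OF r1] \<open>v \<in> C1\<close> by blast
  have "prefix (node T v) r1" "v \<in> route_part n (r1 ! length (node T v))"
    using mem_clique_route_node_iff[OF r1 n] \<open>v \<in> C1\<close> by auto
  then have "take (Suc (length (node T v))) r1 = node T v @ [r1 ! length (node T v)]"
    using assms(4) by (auto simp: prefix_def take_Suc_conv_app_nth)
  then have "prefix (node T v @ [r1 ! length (node T v)]) r2"
    using assms(5) by simp
  then have "prefix (node T v) r2" "r2 ! length (node T v) = r1 ! length (node T v)"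
    by (auto simp: prefix_def nth_append)
  then show ?thesis
    using mem_clique_route_node_iff[OF r2 n] \<open>v \<in> route_part n _\<close> by simp
qed

lemma clique_route_mem_P_node:
  assumes "at_addr T p (PN S cs)" "v \<in> S" "clique_route T r C" "prefix p r"
  shows "v \<in> C"
proof -
  have "node T v = p" using node_eqI assms(1,2) by simp
  then show ?thesis
    using mem_clique_route_node_iff[OF assms(3), of v] assms by simp
qed

lemma clique_route_mem_section_iff:
  assumes "at_addr T p (QN ss)" "i < length ss" "v \<in> fst (ss ! i)" "clique_route T r C" "prefix (p @ [j]) r"
  shows "v \<in> C \<longleftrightarrow> j < length ss \<and> v \<in> fst (ss ! j)"
proof -
  have "node T v = p" using node_eqI[OF assms(1)] assms(2,3) by auto
  moreover have "prefix p r" "r ! length p = j"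
    using assms(5) by (auto simp: prefix_def)
  ultimately show ?thesis
    using mem_clique_route_node_iff[OF assms(4), of v] assms(1) by simp
qed

lemma clique_route_diverge_below_P_node:
  assumes at: "at_addr T p (PN S cs)" and r1: "clique_route T r1 C1" and r2: "clique_route T r2 C2"
    and "prefix (p @ [i]) r1" "prefix p r2" and "v \<in> C1" "v \<notin> C2"
  shows "prefix (p @ [i]) (node T v)"
proof (rule ccontr)
  assume not_below: "\<not> prefix (p @ [i]) (node T v)"
  have v_r1: "prefix (node T v) r1"
    using node_prefix_clique_route[OF r1 \<open>v \<in> C1\<close>] .
  have "prefix p r1" using \<open>prefix (p @ [i]) r1\<close> by (rule append_prefixD)
  have "\<not> length (p @ [i]) \<le> length (node T v)"
    using prefix_length_prefix[OF \<open>prefix (p @ [i]) r1\<close> v_r1] not_below by blast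
  then have v_p: "prefix (node T v) p"
    using prefix_length_prefix[OF v_r1 \<open>prefix p r1\<close>] by simp
  show False
  proof (cases "node T v = p")
    case True
    obtain n where n: "at_addr T (node T v) n" "here v n"
      using at_addr_node clique_route_subset_V[OF r1] \<open>v \<in> C1\<close> by blast
    then have "v \<in> S" using at True at_addr_unique by fastforce
    then show False
      using clique_route_mem_P_node[OF at _ r2 \<open>prefix p r2\<close>] \<open>v \<notin> C2\<close> by blast
  next
    case False
    then have "length (node T v) < length p"
      using prefix_length_less[OF strict_prefixI[OF v_p]] by blast
    moreover have "take (Suc (length (node T v))) r1 = take (Suc (length (node T v))) p"
      using \<open>prefix p r1\<close> calculation by (auto simp: prefix_def)
    ultimately have "prefix (take (Suc (length (node T v))) r1) r2"
      using \<open>prefix p r2\<close> take_is_prefix prefix_order.trans by metis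
    then show False
      using clique_route_mem_transfer[OF r1 r2 \<open>v \<in> C1\<close>] \<open>v \<notin> C2\<close> prefix_length_le[OF \<open>prefix p r1\<close>]
        \<open>length (node T v) < length p\<close> by linarith
  qed
qed

lemma clique_route_position_of_Q_vertex:
  assumes at: "at_addr T p (QN ss)" and "j < length ss" and v: "v \<in> fst (ss ! j) \<union> opt_verts (snd (ss ! j))"
    and r: "clique_route T r C" "v \<in> C"
  shows "r ! length p = j \<or> (r ! length p < length ss \<and> v \<in> fst (ss ! (r ! length p)) \<and> v \<in> fst (ss ! j))"
proof (cases "v \<in> fst (ss ! j)")
  case True
  then have "node T v = p"
    using node_eqI[OF at] \<open>j < length ss\<close> by auto
  then show ?thesis
    using mem_clique_route_node_iff[OF r(1) _] at r(2) True by (auto split: if_splits)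
next
  case False
  then have "prefix (p @ [j]) (node T v)"
    using node_below_position[OF at \<open>j < length ss\<close>] v by blast
  then have "prefix (p @ [j]) r"
    using node_prefix_clique_route[OF r] prefix_order.trans by blast
  then show ?thesis by (auto simp: prefix_def)
qed

lemma clique_route_position_bounds:
  assumes at: "at_addr T p (QN ss)" and "j < length ss" and v: "v \<in> fst (ss ! j) \<union> opt_verts (snd (ss ! j))"
    and r: "clique_route T r C" "v \<in> C"
  shows "j + 1 < length ss \<Longrightarrow> v \<notin> fst (ss ! (j + 1)) \<Longrightarrow> r ! length p \<le> j"
    and "0 < j \<Longrightarrow> v \<notin> fst (ss ! (j - 1)) \<Longrightarrow> j \<le> r ! length p"
proof -
  let ?i = "r ! length p"
  have pos: "?i = j \<or> (?i < length ss \<and> v \<in> fst (ss ! ?i) \<and> v \<in> fst (ss ! j))"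
    by (rule clique_route_position_of_Q_vertex[OF at \<open>j < length ss\<close> v r])
  show "?i \<le> j" if "j + 1 < length ss" "v \<notin> fst (ss ! (j + 1))"
    using pos sections_convex[OF at, of j "j + 1" ?i v] that by fastforce
  show "j \<le> ?i" if "0 < j" "v \<notin> fst (ss ! (j - 1))"
    using pos sections_convex[OF at, of ?i "j - 1" j v] that \<open>j < length ss\<close> by fastforce
qed

lemma clique_route_through_Q_vertex:
  assumes at: "at_addr T p (QN ss)" and "j < length ss" and v: "v \<in> fst (ss ! j) \<union> opt_verts (snd (ss ! j))"
  obtains r C where "clique_route T r C" "v \<in> C" "prefix (p @ [j]) r"
proof (cases "v \<in> fst (ss ! j)")
  case True
  obtain r C where "clique_route T r C" "prefix (p @ [j]) r"
    using clique_route_through_position[OF _ at \<open>j < length ss\<close>] Q_node_nonempty by blast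
  moreover from this have "v \<in> C"
    using clique_route_mem_section_iff[OF at \<open>j < length ss\<close> True] \<open>j < length ss\<close> True by blast
  ultimately show ?thesis using that by blast
next
  case False
  then have "v \<in> V" "prefix (p @ [j]) (node T v)"
    using node_below_position[OF at \<open>j < length ss\<close>] v by auto
  then show ?thesis
    using that vertex_in_clique_route_below by blast
qed

lemma Q_node_outer_vertices:
  assumes at: "at_addr T p (QN ss)"
  obtains a b where "a \<in> V" "b \<in> V" "prefix (p @ [0]) (node T a)" "prefix (p @ [length ss - 1]) (node T b)"
proof -
  obtain a b where a: "a \<in> opt_verts (snd (ss ! 0))" and b: "b \<in> opt_verts (snd (ss ! (length ss - 1)))"
    using Q_node_outer_subtrees[OF at] by blast
  have "0 < length ss" "length ss - 1 < length ss"
    using Q_node_nonempty[OF at] by auto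
  then show ?thesis
    using that node_below_position[OF at _ a] node_below_position[OF at _ b] by blast
qed

lemma P_node_child_vertices:
  assumes at: "at_addr T p (PN S cs)" and "2 \<le> length cs"
  obtains a b where "a \<in> V" "b \<in> V" "prefix (p @ [0]) (node T a)" "prefix (p @ [1]) (node T b)"
proof -
  have child: "at_addr T (p @ [i]) (cs ! i)" if "i < length cs" for i
    using at_addr_append[OF at, of "[i]"] that by simp
  have "at_addr T (p @ [0]) (cs ! 0)" "at_addr T (p @ [1]) (cs ! 1)"
    using child[of 0] child[of 1] assms(2) by linarith+
  obtain r1 C1 where r1: "clique_route T r1 C1" "prefix (p @ [0]) r1"
    using clique_route_through_node[OF \<open>at_addr T (p @ [0]) _\<close>] .
  obtain r2 C2 where r2: "clique_route T r2 C2" "prefix (p @ [1]) r2"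
    using clique_route_through_node[OF \<open>at_addr T (p @ [1]) _\<close>] .
  have "r1 \<noteq> r2"
    using r1(2) r2(2) by (auto simp: prefix_def)
  then have "C1 \<noteq> C2"
    using clique_route_unique[OF r1(1)] r2(1) distinct_cseq_T by auto
  moreover have "max_clique V E C1" "max_clique V E C2"
    using clique_route_max_clique r1(1) r2(1) by auto
  ultimately obtain a b where "a \<in> C1" "a \<notin> C2" "b \<in> C2" "b \<notin> C1"
    unfolding max_clique_def by blast
  then show ?thesis
    using that clique_route_diverge_below_P_node[OF at r1(1) r2(1) r1(2) _ \<open>a \<in> C1\<close> \<open>a \<notin> C2\<close>]
      clique_route_diverge_below_P_node[OF at r2(1) r1(1) r2(2) _ \<open>b \<in> C2\<close> \<open>b \<notin> C1\<close>]
      r1(2) r2(2) append_prefixD clique_route_subset_V r1(1) r2(1) by blast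
qed

end

section \<open>An interval model of G - xy\<close>

locale interval_model_without_edge = mpq_tree +
  fixes x y :: 'a and I :: "'a \<Rightarrow> real \<times> real"
  assumes edge_xy: "{x, y} \<in> E"
    and x_over_y: "over T x y"
    and node_x_ne_node_y: "node T x \<noteq> node T y"
    and proper: "v \<in> V \<Longrightarrow> proper_interval (I v)"
    and model: "u \<in> V \<Longrightarrow> v \<in> V \<Longrightarrow> u \<noteq> v \<Longrightarrow> {u, v} \<in> E - {{x, y}} \<longleftrightarrow> intervals_meet (I u) (I v)"
begin

lemma x_in_V: "x \<in> V" and y_in_V: "y \<in> V"
  using simple edge_xy by (auto simp: simple_graph_def)

lemma x_ne_y: "x \<noteq> y"
proof -
  have "card {x, y} = 2" using simple edge_xy unfolding simple_graph_def by blast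
  then show ?thesis by (cases "x = y") auto
qed

lemma x_y_disjoint: "\<not> intervals_meet (I x) (I y)"
  using model[OF x_in_V y_in_V x_ne_y] by simp

lemma node_x_shorter: "length (node T x) < length (node T y)"
  using x_over_y node_x_ne_node_y by (auto simp: over_def)

lemma below_node_y_not_x_y:
  assumes "prefix (node T y @ [j]) (node T v)"
  shows "v \<noteq> x" "v \<noteq> y"
proof -
  have "length (node T y) < length (node T v)"
    using prefix_length_le[OF assms] by simp
  then show "v \<noteq> x" "v \<noteq> y"
    using node_x_shorter by auto
qed

lemma meet_if_common_clique_route:
  assumes "clique_route T r C" "u \<in> C" "v \<in> C" "{u, v} \<noteq> {x, y}"
  shows "intervals_meet (I u) (I v)"
proof (cases "u = v")
  case True
  then show ?thesis
    using proper intervals_meet_self clique_route_subset_V[OF assms(1)] assms(2) by blast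
next
  case False
  have "u \<in> V" "v \<in> V" using clique_route_subset_V[OF assms(1)] assms(2,3) by auto
  have "{u, v} \<in> E"
    using clique_route_max_clique[OF assms(1)] assms(2,3) False unfolding max_clique_def is_clique_def by blast
  then show ?thesis
    using model[OF \<open>u \<in> V\<close> \<open>v \<in> V\<close> False] assms(4) by blast
qed

lemma disjoint_if_no_common_clique_route:
  assumes "u \<in> V" "v \<in> V" and no_route: "\<And>r C. clique_route T r C \<Longrightarrow> u \<in> C \<Longrightarrow> v \<in> C \<Longrightarrow> False"
  shows "\<not> intervals_meet (I u) (I v)"
proof
  assume meet: "intervals_meet (I u) (I v)"
  obtain r C where "clique_route T r C" "u \<in> C"
    using vertex_in_clique_route[OF assms(1)] .
  then have "u \<noteq> v" using no_route by blast
  then have "is_clique V E {u, v}"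
    using model[OF assms(1,2)] meet assms(1,2) by (auto simp: is_clique_def insert_commute)
  then obtain r' C' where "clique_route T r' C'" "{u, v} \<subseteq> C'"
    by (rule clique_in_clique_route)
  then show False
    using no_route by blast
qed

lemma meets_avoiding_if_common_clique_route:
  assumes "clique_route T r C" "u \<in> C" "v \<in> C" "{u, v} \<noteq> {x, y}"
    and "\<not> intervals_meet (I u) (I w)" "\<not> intervals_meet (I v) (I w)"
  shows "meets_avoiding (I w) (I u) (I v)"
  using meet_if_common_clique_route[OF assms(1-4)] assms(5,6) proper clique_route_subset_V[OF assms(1)]
    assms(2,3) by (auto simp: meets_avoiding_def)

lemma disjoint_below_distinct_positions:
  assumes "u \<in> V" "v \<in> V" "prefix (p @ [i]) (node T u)" "prefix (p @ [j]) (node T v)" "i \<noteq> j"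
  shows "\<not> intervals_meet (I u) (I v)"
proof (rule disjoint_if_no_common_clique_route[OF assms(1,2)])
  fix r C assume "clique_route T r C" "u \<in> C" "v \<in> C"
  then have "prefix (p @ [i]) r" "prefix (p @ [j]) r"
    using assms(3,4) node_prefix_clique_route prefix_order.trans by blast+
  then show False
    using assms(5) by (auto simp: prefix_def nth_append)
qed

lemma disjoint_section_vertex_below_position:
  assumes at: "at_addr T p (QN ss)" and "i < length ss" "e \<in> fst (ss ! i)" "e \<notin> fst (ss ! j)"
    and "v \<in> V" "prefix (p @ [j]) (node T v)"
  shows "\<not> intervals_meet (I e) (I v)"
proof (rule disjoint_if_no_common_clique_route)
  show "e \<in> V" using node_of_Q_vertex(1)[OF at assms(2)] assms(3) by blast
  fix r C assume "clique_route T r C" "e \<in> C" "v \<in> C"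
  moreover from this have "prefix (p @ [j]) r"
    using assms(6) node_prefix_clique_route prefix_order.trans by blast
  ultimately show False
    using clique_route_mem_section_iff[OF at assms(2,3)] assms(4) by blast
qed (rule assms(5))

text \<open>A maximal clique containing x and y reaches node(y), so x lies in the part of node(x)
  through which the path to node(y) leaves it.\<close>

lemma x_in_clique_route:
  assumes "clique_route T r C" "prefix (take (Suc (length (node T x))) (node T y)) r"
  shows "x \<in> C"
proof -
  have "is_clique V E {x, y}"
    using edge_xy x_in_V y_in_V x_ne_y by (auto simp: is_clique_def insert_commute)
  then obtain r0 C0 where "clique_route T r0 C0" "{x, y} \<subseteq> C0"
    by (rule clique_in_clique_route)
  then have r0: "clique_route T r0 C0" "x \<in> C0" "y \<in> C0" by auto
  obtain zs where "r0 = node T y @ zs"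
    using node_prefix_clique_route[OF r0(1,3)] by (auto simp: prefix_def)
  then have "take (Suc (length (node T x))) r0 = take (Suc (length (node T x))) (node T y)"
    "length (node T x) < length r0"
    using node_x_shorter by simp_all
  then show ?thesis
    using clique_route_mem_transfer[OF r0(1) assms(1) r0(2)] assms(2) by simp
qed

lemma x_in_clique_route_below_y:
  assumes "clique_route T r C" "prefix (node T y) r"
  shows "x \<in> C"
  using x_in_clique_route[OF assms(1)] assms(2) take_is_prefix prefix_order.trans by blast

lemma no_four_cycle_with_x_y:
  assumes "a \<in> V" "b \<in> V" "a \<notin> {x, y}" "b \<notin> {x, y}"
    and "clique_route T ra Ca" "{x, y, a} \<subseteq> Ca" and "clique_route T rb Cb" "{x, y, b} \<subseteq> Cb"
    and "\<not> intervals_meet (I a) (I b)"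
  shows False
proof (rule no_induced_four_cycle_intervals)
  show "intervals_meet (I x) (I a)" "intervals_meet (I a) (I y)"
    using meet_if_common_clique_route[OF assms(5)] assms(3,6) by (auto simp: doubleton_eq_iff)
  show "intervals_meet (I y) (I b)" "intervals_meet (I b) (I x)"
    using meet_if_common_clique_route[OF assms(7)] assms(4,8) by (auto simp: doubleton_eq_iff)
qed (use assms(1,2,9) x_in_V y_in_V x_y_disjoint in \<open>simp_all add: proper\<close>)

lemma no_disjoint_pair_below_P_node_of_y:
  assumes at: "at_addr T (node T y) (PN S cs)"
    and V: "a \<in> V" "b \<in> V" and below: "prefix (node T y @ [i]) (node T a)" "prefix (node T y @ [j]) (node T b)"
    and "\<not> intervals_meet (I a) (I b)"
  shows False
proof -
  obtain n where "at_addr T (node T y) n" "here y n"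
    using at_addr_node[OF y_in_V] .
  then have "y \<in> S" using at at_addr_unique by fastforce
  have x_y_in: "{x, y, v} \<subseteq> C" if "clique_route T r C" "v \<in> C" "prefix (node T y) r" for r C v
    using clique_route_mem_P_node[OF at \<open>y \<in> S\<close> that(1,3)] x_in_clique_route_below_y[OF that(1,3)] that(2)
    by blast
  obtain ra Ca where ra: "clique_route T ra Ca" "a \<in> Ca" "prefix (node T y) ra"
    using vertex_in_clique_route_below[OF V(1)] below(1) append_prefixD by blast
  obtain rb Cb where rb: "clique_route T rb Cb" "b \<in> Cb" "prefix (node T y) rb"
    using vertex_in_clique_route_below[OF V(2)] below(2) append_prefixD by blast
  show False
    using no_four_cycle_with_x_y[OF V _ _ ra(1) x_y_in[OF ra] rb(1) x_y_in[OF rb]]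
      below_node_y_not_x_y[OF below(1)] below_node_y_not_x_y[OF below(2)] assms(6) by blast
qed

lemma P_node_of_y_is_leaf:
  assumes at: "at_addr T (node T y) (PN S cs)"
  shows "cs = []"
proof (rule ccontr)
  let ?py = "node T y"
  assume "cs \<noteq> []"
  have no_P_child: "\<not> (\<exists>T ds. cs = [PN T ds])"
    using node_ok_at[OF at] by simp
  consider "2 \<le> length cs" | ss where "cs = [QN ss]"
  proof (cases "2 \<le> length cs")
    case False
    then obtain c where "cs = [c]"
      using \<open>cs \<noteq> []\<close> by (cases cs) (auto simp: Suc_le_eq)
    then show ?thesis
      using that no_P_child by (cases c) auto
  qed
  then show False
  proof cases
    case 1
    then obtain a b where V: "a \<in> V" "b \<in> V"
      and below: "prefix (?py @ [0]) (node T a)" "prefix (?py @ [1]) (node T b)"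
      using P_node_child_vertices[OF at] by blast
    then show False
      using no_disjoint_pair_below_P_node_of_y[OF at V below] disjoint_below_distinct_positions[OF V below]
      by simp
  next
    case (2 ss)
    have at_Q: "at_addr T (?py @ [0]) (QN ss)"
      using at_addr_append[OF at, of "[0]" "QN ss"] 2 by simp
    obtain a b where V: "a \<in> V" "b \<in> V"
      and below: "prefix ((?py @ [0]) @ [0]) (node T a)" "prefix ((?py @ [0]) @ [length ss - 1]) (node T b)"
      using Q_node_outer_vertices[OF at_Q] by blast
    have "\<not> intervals_meet (I a) (I b)"
      by (rule disjoint_below_distinct_positions[OF V below]) (use Q_node_length[OF at_Q] in simp)
    then show False
      using no_disjoint_pair_below_P_node_of_y[OF at V] below append_prefixD by blast
  qed
qed

lemma node_of_y_not_Q_node: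
  assumes at: "at_addr T (node T y) (QN ss)"
  shows False
proof -
  let ?py = "node T y" and ?S = "\<lambda>i. fst (ss ! i)" and ?W = "\<lambda>i. opt_verts (snd (ss ! i))"
  obtain n where "at_addr T ?py n" "here y n"
    using at_addr_node[OF y_in_V] .
  then have "here y (QN ss)" using at at_addr_unique by blast
  then obtain l r where lr: "l < r" "r < length ss" and y_sec: "\<And>i. i < length ss \<Longrightarrow> y \<in> ?S i \<longleftrightarrow> l \<le> i \<and> i \<le> r"
    using Q_vertex_section_range[OF at] by blast
  obtain a where a: "a \<in> ?S l \<union> ?W l" "a \<notin> ?S (l + 1)"
    using Q_node_neighbour_differences(1)[OF at, of "l + 1"] lr by auto
  obtain b where b: "b \<in> ?S r \<union> ?W r" "b \<notin> ?S (r - 1)"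
    using Q_node_neighbour_differences(2)[OF at, of r] lr by auto
  have l_len: "l < length ss" using lr by simp
  have V: "a \<in> V" "b \<in> V" and below: "prefix ?py (node T a)" "prefix ?py (node T b)"
    using node_of_Q_vertex[OF at l_len a(1)] node_of_Q_vertex[OF at lr(2) b(1)] by auto
  have "a \<noteq> x" "b \<noteq> x"
    using below prefix_length_le node_x_shorter by fastforce+
  moreover have "a \<noteq> y" "b \<noteq> y"
    using a(2) b(2) y_sec[of "l + 1"] y_sec[of "r - 1"] lr by auto
  ultimately have not_x_y: "a \<notin> {x, y}" "b \<notin> {x, y}" by auto
  have disjoint: "\<not> intervals_meet (I a) (I b)"
  proof (rule disjoint_if_no_common_clique_route[OF V])
    fix r' C assume "clique_route T r' C" "a \<in> C" "b \<in> C"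
    then show False
      using clique_route_position_bounds(1)[OF at l_len a(1), of r' C]
        clique_route_position_bounds(2)[OF at lr(2) b(1), of r' C] a(2) b(2) lr by force
  qed
  have x_y_in: "{x, y, v} \<subseteq> C" if "clique_route T r' C" "v \<in> C" "prefix (?py @ [j]) r'" "l \<le> j" "j \<le> r"
    for v r' C j
  proof -
    have "j < length ss" using that lr by simp
    then have "y \<in> C"
      using clique_route_mem_section_iff[OF at _ _ that(1,3), of j] y_sec that(4,5) by blast
    then show ?thesis
      using x_in_clique_route_below_y[OF that(1)] that(2,3) append_prefixD by blast
  qed
  obtain ra Ca where ra: "clique_route T ra Ca" "a \<in> Ca" "prefix (?py @ [l]) ra"
    using clique_route_through_Q_vertex[OF at l_len a(1)] .
  obtain rb Cb where rb: "clique_route T rb Cb" "b \<in> Cb" "prefix (?py @ [r]) rb"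
    using clique_route_through_Q_vertex[OF at lr(2) b(1)] .
  show False
    using no_four_cycle_with_x_y[OF V not_x_y ra(1) x_y_in[OF ra] rb(1) x_y_in[OF rb] disjoint] lr
    by simp
qed

lemma meets_avoiding_y_through_x:
  assumes "u \<in> V" "clique_route T ru Cu" "{x, u} \<subseteq> Cu" "\<not> intervals_meet (I u) (I y)"
    and "v \<in> V" "clique_route T rv Cv" "{x, v} \<subseteq> Cv" "\<not> intervals_meet (I v) (I y)"
  shows "(meets_avoiding (I y))\<^sup>*\<^sup>* (I u) (I v)"
proof -
  have "u \<noteq> y" "v \<noteq> y"
    using assms(1,4,5,8) intervals_meet_self proper by blast+
  then have "meets_avoiding (I y) (I u) (I x)" "meets_avoiding (I y) (I x) (I v)"
    using meets_avoiding_if_common_clique_route[OF assms(2), of u x y]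
      meets_avoiding_if_common_clique_route[OF assms(6), of x v y] assms(3,4,7,8) x_ne_y x_y_disjoint
    by (auto simp: doubleton_eq_iff)
  then show ?thesis
    by (meson rtranclp.rtrancl_into_rtrancl r_into_rtranclp)
qed

text \<open>The walk passes through vertices of consecutive sections lo-1, ..., hi that avoid section j,
  and hence avoid w.\<close>

lemma section_chain_avoiding:
  assumes at: "at_addr T p (QN ss)" and "p \<noteq> node T x" "p \<noteq> node T y"
    and "1 \<le> lo" "lo \<le> hi" "hi < length ss"
    and w: "w \<in> V" "prefix (p @ [j]) (node T w)"
    and overlaps: "\<And>i. lo \<le> i \<Longrightarrow> i \<le> hi \<Longrightarrow> (fst (ss ! (i - 1)) \<inter> fst (ss ! i)) - fst (ss ! j) \<noteq> {}"
    and u: "clique_route T ru Cu" "u \<in> Cu" "prefix (p @ [lo - 1]) ru" "\<not> intervals_meet (I u) (I w)"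
    and v: "clique_route T rv Cv" "v \<in> Cv" "prefix (p @ [hi]) rv" "\<not> intervals_meet (I v) (I w)"
  shows "(meets_avoiding (I w))\<^sup>*\<^sup>* (I u) (I v)"
proof -
  have links: "\<exists>e \<in> fst (ss ! (i - 1)) \<inter> fst (ss ! i). \<not> intervals_meet (I e) (I w)"
    if i: "lo \<le> i" "i \<le> hi" for i
  proof -
    obtain e where "e \<in> fst (ss ! (i - 1)) \<inter> fst (ss ! i)" "e \<notin> fst (ss ! j)"
      using overlaps[OF i] by blast
    moreover have "i < length ss" using i assms(6) by simp
    ultimately show ?thesis
      using disjoint_section_vertex_below_position[OF at _ _ _ w] by blast
  qed
  have sec: "e \<notin> {x, y} \<and> (e \<in> C \<longleftrightarrow> e \<in> fst (ss ! k))"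
    if "i < length ss" "e \<in> fst (ss ! i)" "clique_route T r C" "prefix (p @ [k]) r" "k < length ss"
    for i e k r C
    using clique_route_mem_section_iff[OF at that(1-4)] node_eqI[OF at, of e] that assms(2,3) by auto
  have walk: "\<exists>e \<in> fst (ss ! (i - 1)) \<inter> fst (ss ! i). \<not> intervals_meet (I e) (I w) \<and>
      (meets_avoiding (I w))\<^sup>*\<^sup>* (I u) (I e)" if "lo \<le> i" "i \<le> hi" for i
    using that
  proof (induction i rule: dec_induct)
    case base
    then obtain e where e: "e \<in> fst (ss ! (lo - 1)) \<inter> fst (ss ! lo)" "\<not> intervals_meet (I e) (I w)"
      using links assms(5) by blast
    have "lo - 1 < length ss" using assms(5,6) by simp
    then have "e \<notin> {x, y}" "e \<in> Cu"
      using sec[of "lo - 1" e ru Cu "lo - 1"] e(1) u(1,3) by auto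
    then have "meets_avoiding (I w) (I u) (I e)"
      using meets_avoiding_if_common_clique_route[OF u(1,2) _ _ u(4) e(2)] by auto
    then show ?case using e by blast
  next
    case (step n)
    then obtain e where e: "e \<in> fst (ss ! (n - 1)) \<inter> fst (ss ! n)" "\<not> intervals_meet (I e) (I w)"
      "(meets_avoiding (I w))\<^sup>*\<^sup>* (I u) (I e)"
      by auto
    obtain e' where e': "e' \<in> fst (ss ! n) \<inter> fst (ss ! Suc n)" "\<not> intervals_meet (I e') (I w)"
      using links[of "Suc n"] step.hyps step.prems by auto
    have "n < length ss" using step.hyps step.prems assms(6) by simp
    then obtain r C where r: "clique_route T r C" "prefix (p @ [n]) r"
      using clique_route_through_position[OF _ at] Q_node_nonempty by blast
    have "e \<notin> {x, y}" "e \<in> C" "e' \<in> C"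
      using sec[of n e r C n] sec[of n e' r C n] e(1) e'(1) r \<open>n < length ss\<close> by auto
    then have "meets_avoiding (I w) (I e) (I e')"
      using meets_avoiding_if_common_clique_route[OF r(1) _ _ _ e(2) e'(2)] by auto
    then show ?case using e(3) e'(1,2) by (auto intro: rtranclp.rtrancl_into_rtrancl)
  qed
  obtain e where e: "e \<in> fst (ss ! (hi - 1)) \<inter> fst (ss ! hi)" "\<not> intervals_meet (I e) (I w)"
    "(meets_avoiding (I w))\<^sup>*\<^sup>* (I u) (I e)"
    using walk[of hi] assms(5) by blast
  have "e \<notin> {x, y}" "e \<in> Cv"
    using sec[of hi e rv Cv hi] e(1) v(1,3) assms(6) by auto
  then have "meets_avoiding (I w) (I e) (I v)"
    using meets_avoiding_if_common_clique_route[OF v(1) _ v(2) _ e(2) v(4)] by auto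
  then show ?thesis using e(3) by (auto intro: rtranclp.rtrancl_into_rtrancl)
qed

text \<open>The vertices p0 and q0 below the outer positions of the Q-node are linked around y
  through x, and each of them is linked to y along the sections on its side of the central
  position a, avoiding the other one.\<close>

lemma not_through_central: "\<not> through_central T x y"
proof
  assume "through_central T x y"
  then obtain m ss where m: "length (node T x) < m" "m < length (node T y)"
      and at: "at_addr T (take m (node T y)) (QN ss)"
      and a: "0 < node T y ! m" "node T y ! m < length ss - 1"
    unfolding through_central_def by blast
  define q a k where "q = take m (node T y)" and "a = node T y ! m" and "k = length ss"
  have at: "at_addr T q (QN ss)" using at by (simp add: q_def)
  have a_range: "1 \<le> a" "a + 1 \<le> k - 1" "a < length ss" "k - 1 < length ss" "k - 1 \<noteq> 0"
    using a Q_node_length[OF at] by (auto simp: a_def k_def)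
  have y_below: "prefix (q @ [a]) (node T y)"
    using m(2) by (simp add: q_def a_def take_Suc_conv_app_nth[symmetric] take_is_prefix)
  have "length q = m" using m(2) by (simp add: q_def)
  then have q_ne: "q \<noteq> node T x" "q \<noteq> node T y"
    using m by auto
  have "prefix (take (Suc (length (node T x))) (node T y)) q"
    using m(1) take_is_prefix[of "Suc (length (node T x))" q] by (simp add: q_def min_def)
  then have x_in: "x \<in> C" if "clique_route T r C" "prefix (q @ [j]) r" for r C j
    using x_in_clique_route[OF that(1)] that(2) append_prefixD prefix_order.trans by blast
  obtain p0 q0 where V: "p0 \<in> V" "q0 \<in> V"
    and below: "prefix (q @ [0]) (node T p0)" "prefix (q @ [k - 1]) (node T q0)"
    using Q_node_outer_vertices[OF at] by (auto simp: k_def)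
  obtain rp Cp where rp: "clique_route T rp Cp" "p0 \<in> Cp" "prefix (q @ [0]) rp"
    using vertex_in_clique_route_below[OF V(1) below(1)] .
  obtain rq Cq where rq: "clique_route T rq Cq" "q0 \<in> Cq" "prefix (q @ [k - 1]) rq"
    using vertex_in_clique_route_below[OF V(2) below(2)] .
  obtain ry Cy where ry: "clique_route T ry Cy" "y \<in> Cy" "prefix (q @ [a]) ry"
    using vertex_in_clique_route_below[OF y_in_V y_below] .
  have p0_q0: "\<not> intervals_meet (I p0) (I q0)"
    using disjoint_below_distinct_positions[OF V below] a_range by simp
  have p0_y: "\<not> intervals_meet (I p0) (I y)"
    using disjoint_below_distinct_positions[OF V(1) y_in_V below(1) y_below] a_range by simp
  have y_q0: "\<not> intervals_meet (I y) (I q0)"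
    using disjoint_below_distinct_positions[OF y_in_V V(2) y_below below(2)] a_range by simp
  have around_y: "(meets_avoiding (I y))\<^sup>*\<^sup>* (I p0) (I q0)"
    using meets_avoiding_y_through_x[OF V(1) rp(1) _ p0_y V(2) rq(1)] x_in[OF rp(1,3)] x_in[OF rq(1,3)]
      rp(2) rq(2) y_q0 by (simp add: intervals_meet_commute)
  have "(fst (ss ! (i - 1)) \<inter> fst (ss ! i)) - fst (ss ! (k - 1)) \<noteq> {}" if "1 \<le> i" "i \<le> a" for i
    using Q_node_overlaps(2)[OF at \<open>1 \<le> i\<close>] that a_range by (simp add: k_def)
  moreover have "prefix (q @ [1 - 1]) rp" using rp(3) by simp
  ultimately have left: "(meets_avoiding (I q0))\<^sup>*\<^sup>* (I p0) (I y)"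
    using section_chain_avoiding[OF at q_ne order_refl a_range(1,3) V(2) below(2) _ rp(1,2) _ p0_q0
        ry(1,2,3)] y_q0 by (simp add: intervals_meet_commute)
  have "(fst (ss ! (i - 1)) \<inter> fst (ss ! i)) - fst (ss ! 0) \<noteq> {}" if "a + 1 \<le> i" "i \<le> k - 1" for i
    using Q_node_overlaps(1)[OF at, of "i - 1"] that a_range by (simp add: k_def)
  moreover have "prefix (q @ [a + 1 - 1]) ry" using ry(3) by simp
  ultimately have right: "(meets_avoiding (I p0))\<^sup>*\<^sup>* (I y) (I q0)"
    using section_chain_avoiding[OF at q_ne _ a_range(2,4) V(1) below(1) _ ry(1,2) _ _ rq(1,2,3)]
      p0_y p0_q0 by (simp add: intervals_meet_commute)
  show False
    using no_asteroidal_triple_intervals[OF proper[OF V(1)] proper[OF y_in_V] proper[OF V(2)]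
        p0_y y_q0 p0_q0 left right around_y] .
qed

theorem path_almost_rotable: "almost_rotable T x y"
  unfolding almost_rotable_def
proof
  show "\<not> through_central T x y" by (rule not_through_central)
  obtain n where "at_addr T (node T y) n"
    using at_addr_node[OF y_in_V] by blast
  then show "\<exists>S. at_addr T (node T y) (PN S [])"
    by (cases n) (auto dest: P_node_of_y_is_leaf node_of_y_not_Q_node)
qed

end

theorem mainTheorem12:
  fixes V :: "'a set" and E :: "'a set set" and T :: "'a mpq" and x y :: 'a
  assumes "interval_graph V E"
    and "mpq_tree_of V E T"
    and "{x, y} \<in> E"
    and "over T x y"
    and "node T x \<noteq> node T y"
    and "\<not> almost_rotable T x y"
  shows "\<not> interval_edge V E x y"
proof
  assume "interval_edge V E x y"
  then obtain I :: "'a \<Rightarrow> real \<times> real" where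
    "\<forall>v\<in>V. fst (I v) \<le> snd (I v)"
    "\<forall>u\<in>V. \<forall>v\<in>V. u \<noteq> v \<longrightarrow> ({u, v} \<in> E - {{x, y}} \<longleftrightarrow> max (fst (I u)) (fst (I v)) \<le> min (snd (I u)) (snd (I v)))"
    unfolding interval_edge_def interval_graph_def by blast
  then interpret interval_model_without_edge V E T x y I
    using assms(1-5) by unfold_locales (auto simp: interval_graph_def proper_interval_def intervals_meet_def)
  show False using path_almost_rotable assms(6) by blast
qed

end
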